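(* Let $X$ have the isotropic Matérn covariance, and assign independent priors $\beta\sim N(0,a_0I_p)$, $\theta\sim\mathrm{IG}(a_1,b_1)$, $\tau\sim\mathrm{IG}(a_2,b_2)$, $\alpha\sim\mathrm{IGauss}(\mu,\lambda)$ with positive hyperparameters $a_0,a_1,b_1,a_2,b_2,\mu,\lambda$ satisfying $a_1>2(3p+6)/\rho_{21}$ and $a_2>2(3p+6)/\rho_{22}$. Then Assumption A3 (stated in the context) holds for any true parameter $(\theta_0,\alpha_0,\tau_0,\beta_0)\in\mathbb R_+^3\times\mathbb R^p$, and $\Pi(\mathcal E_n^c)\le n^{-(3p+6)}$ for all sufficiently large $n$ (i.e. Assumption A5 with $\kappa=1$ holds for $\mathcal E_n$).
   Context: Model: $Y(\mathbf s)=\mathrm f(\mathbf s)^T\beta+X(\mathbf s)+\varepsilon(\mathbf s)$ on $[0,1]^d$, $\beta\in\mathbb R^p$, $\varepsilon$ white noise with variance $\tau$, $X$ zero-mean Gaussian with isotropic Matérn covariance $\theta K_{\alpha,\nu}(\mathbf s-\mathbf t)$, $K_{\alpha,\nu}(x)=\frac{2^{1-\nu}}{\Gamma(\nu)}(\|x\|/\alpha)^\nu\mathcal K_\nu(\alpha\|x\|)$, $\nu>0$ known. $\mathrm{IG}(a,b)$ is the inverse gamma law with density $\frac{b^a}{\Gamma(a)}x^{-a-1}e^{-b/x}$, $x>0$; $\mathrm{IGauss}(\mu,\lambda)$ is the inverse Gaussian law with density $(\lambda/(2\pi x^3))^{1/2}\exp\{-\lambda(x-\mu)^2/(2\mu^2x)\}$,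 $x>0$. $\Pi$ is the prior measure. Assumption A3: the prior does not depend on $n$, has a proper density $\pi$ continuous in a neighborhood of $(\theta_0,\alpha_0,\tau_0,\beta_0)$ with $\pi(\theta_0,\alpha_0,\tau_0,\beta_0)>0$, and $\int_0^\infty\tau^{-n/2}\pi(\tau)d\tau<\infty$ for every $n\in\mathbb Z_+$. $\mathcal E_n=\{(\theta,\alpha,\tau,\beta)\in\mathbb R_+^3\times\mathbb R^p:\|\beta\|^2/\theta\le n^{\rho_1},\ \tau/\theta\in[n^{-\rho_{21}},n^{\rho_{22}}],\ \alpha\in[n^{-\rho_{31}},n^{\rho_{32}}]\}$, where for some $\gamma\in(\max\{1-d/(4\nu),0\},1)$ the constants satisfy $0<\rho_1<1-\gamma$, $0<\rho_{21}<2\nu(1-\gamma)/d$, $0<\rho_{22}<1/2-2(1-\gamma)\nu/d$, $\rho_{31}>0$, $0<\rho_{32}<(1-\gamma)/d$. *)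

theory Defs
  imports "HOL-Probability.Probability"
begin

type_synonym 'p param = "real \<times> real \<times> real \<times> (real ^ 'p)"
  (* (theta, alpha, tau, beta) *)

definition ig_density :: "real \<Rightarrow> real \<Rightarrow> real \<Rightarrow> real" where
  "ig_density a b x = (if x > 0 then b powr a / Gamma a * x powr (-a - 1) * exp (- b / x) else 0)"

definition igauss_density :: "real \<Rightarrow> real \<Rightarrow> real \<Rightarrow> real" where
  "igauss_density mu lam x = (if x > 0 then
      sqrt (lam / (2 * pi * x ^ 3)) * exp (- lam * (x - mu)^2 / (2 * mu^2 * x)) else 0)"

definition prior_density ::
  "real \<Rightarrow> real \<Rightarrow> real \<Rightarrow> real \<Rightarrow> real \<Rightarrow> real \<Rightarrow> real \<Rightarrow> ('p::finite) param \<Rightarrow> real" where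
  "prior_density a0 a1 b1 a2 b2 mu lam = (\<lambda>(\<theta>, \<alpha>, \<tau>, \<beta>).
      ig_density a1 b1 \<theta> * igauss_density mu lam \<alpha> * ig_density a2 b2 \<tau> *
      (\<Prod>i\<in>UNIV. normal_density 0 (sqrt a0) (\<beta> $ i)))"

text \<open>Assumption A3 for a prior density pd on R_+^3 x R^p and true parameter x0.
  (Independence of n is automatic: pd does not depend on n.)\<close>
definition assumption_A3 :: "(('p::finite) param \<Rightarrow> real) \<Rightarrow> 'p param \<Rightarrow> bool" where
  "assumption_A3 pd x0 \<longleftrightarrow>
     pd \<in> borel_measurable lborel \<and> (\<forall>x. pd x \<ge> 0) \<and>
     (\<integral>\<^sup>+ x. ennreal (pd x) \<partial>lborel) = 1 \<and>
     (\<exists>e>0. continuous_on (ball x0 e) pd) \<and>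
     pd x0 > 0 \<and>
     (\<forall>n::nat. n > 0 \<longrightarrow>
        (\<integral>\<^sup>+ x. ennreal ((fst (snd (snd x))) powr (- (real n / 2)) * pd x) \<partial>lborel) < \<infinity>)"

definition sieve_E :: "real \<Rightarrow> real \<Rightarrow> real \<Rightarrow> real \<Rightarrow> real \<Rightarrow> nat \<Rightarrow> ('p::finite) param set" where
  "sieve_E \<rho>1 \<rho>21 \<rho>22 \<rho>31 \<rho>32 n = {(\<theta>, \<alpha>, \<tau>, \<beta>).
      \<theta> > 0 \<and> \<alpha> > 0 \<and> \<tau> > 0 \<and>
      (norm \<beta>)^2 / \<theta> \<le> real n powr \<rho>1 \<and>
      real n powr (- \<rho>21) \<le> \<tau> / \<theta> \<and> \<tau> / \<theta> \<le> real n powr \<rho>22 \<and>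
      real n powr (- \<rho>31) \<le> \<alpha> \<and> \<alpha> \<le> real n powr \<rho>32}"

end

(*
  The prior is a product of one-dimensional densities, so Assumption A3 reduces to facts about
  the inverse gamma, inverse Gaussian and normal laws: each integrates to one, is continuous and
  positive where its argument is positive, and IG(a2, b2) has finite moments of every negative
  order.  For the sieve, each constraint on a ratio (|beta|^2 / theta and tau / theta) splits
  into constraints on single coordinates, so the complement of the sieve is covered by tail
  events of theta, alpha, tau and |beta|^2.  By Markov's inequality a tail {X > n^r} has prior
  mass O(n^(-r q)) when E X^q < oo, and lower tails {X < n^(-r)} have mass O(n^(-r q)) for all
  q because every negative moment is finite; the tails of alpha and |beta|^2 even decay
  exponentially.  IG(a, b) has moments exactly of the orders below a, which is why the upper
  tails of theta and tau require a1 > 2 (3p + 6) / rho21 and a2 > 2 (3p + 6) / rho22.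
*)

theory Submission
  imports Defs "HOL-Real_Asymp.Real_Asymp"
begin

section \<open>Inverse gamma and inverse Gaussian densities\<close>

lemma inverse_gamma_kernel_has_integral:
  fixes r b :: real
  assumes r: "r > 0" and b: "b > 0"
  shows "((\<lambda>x. x powr (-r-1) * exp (-b/x)) has_integral (b powr (-r) * Gamma r)) {0<..}"
proof -
  have "((\<lambda>t. t powr (r-1) / exp t) has_integral Gamma r) {0..}"
    using Gamma_integral_real[OF r] .
  moreover have "((\<lambda>t. t powr (r-1) / exp t) has_integral Gamma r) {0..}
      \<longleftrightarrow> ((\<lambda>t. t powr (r-1) / exp t) has_integral Gamma r) {0<..}"
    by (rule has_integral_spike_set_eq) (auto intro: negligible_subset[of "{0}"])
  ultimately have Gamma: "((\<lambda>t. t powr (r-1) / exp t) has_integral Gamma r) {0<..}"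
    by simp
  define h where "h y = \<bar>- b / y\<^sup>2\<bar> * ((b/y) powr (-r-1) * exp (-b/(b/y)))" for y :: real
  have h_eq: "h y = b powr (-r) * (y powr (r-1) / exp y)" if "y > 0" for y
  proof -
    have "(b/y) powr (-r-1) = b powr (-r) / b * (y powr (r-1) * y\<^sup>2)"
      using that b by (simp add: powr_divide powr_diff powr_minus powr_add power2_eq_square divide_simps)
    then show ?thesis
      unfolding h_def using that b by (simp add: field_simps exp_minus)
  qed
  have h: "(h has_integral (b powr (-r) * Gamma r)) {0<..}"
    using has_integral_mult_right[OF Gamma, of "b powr (-r)"]
    by (rule has_integral_eq[rotated]) (simp add: h_eq)
  have image: "(\<lambda>y. b / y) ` {0<..} = {0<..}"
  proof safe
    fix x :: real assume "x > 0"
    then show "x \<in> (\<lambda>y. b / y) ` {0<..}" using b by (intro image_eqI[of _ _ "b/x"]) auto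
  qed (use b in auto)
  have "h absolutely_integrable_on {0<..} \<and> integral {0<..} h = b powr (-r) * Gamma r"
    using h unfolding h_def
    by (auto intro!: nonnegative_absolutely_integrable_1 simp: has_integral_integrable integral_unique)
  then have "(\<lambda>x. x powr (-r-1) * exp (-b/x)) absolutely_integrable_on (\<lambda>y. b / y) ` {0<..} \<and>
         integral ((\<lambda>y. b / y) ` {0<..}) (\<lambda>x. x powr (-r-1) * exp (-b/x)) = b powr (-r) * Gamma r"
    unfolding h_def
    by (subst (asm) has_absolute_integral_change_of_variables_1')
       (use b in \<open>auto intro!: derivative_eq_intros simp: inj_on_def power2_eq_square field_simps\<close>)
  then show ?thesis
    unfolding image by (metis absolutely_integrable_on_def has_integral_integral)
qed

lemma nn_integral_inverse_gamma_kernel: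
  fixes r b :: real
  assumes "r > 0" and "b > 0"
  shows "(\<integral>\<^sup>+x. ennreal (indicator {0<..} x * (x powr (-r-1) * exp (-b/x))) \<partial>lborel)
           = ennreal (b powr (-r) * Gamma r)"
  by (rule nn_integral_has_integral_lebesgue[OF _ inverse_gamma_kernel_has_integral[OF assms]]) auto

lemma ig_density_measurable [measurable]: "ig_density a b \<in> borel_measurable borel"
  unfolding ig_density_def[abs_def] by measurable

lemma ig_density_nonneg: "a > 0 \<Longrightarrow> b > 0 \<Longrightarrow> ig_density a b x \<ge> 0"
  by (auto simp: ig_density_def intro!: mult_nonneg_nonneg divide_nonneg_pos)

lemma ig_density_pos: "a > 0 \<Longrightarrow> b > 0 \<Longrightarrow> x > 0 \<Longrightarrow> ig_density a b x > 0"
  by (auto simp: ig_density_def intro!: mult_pos_pos divide_pos_pos)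

lemma nn_integral_ig_density_moment:
  fixes a b q :: real
  assumes a: "a > 0" and b: "b > 0" and q: "q < a"
  shows "(\<integral>\<^sup>+x. ennreal (x powr q * ig_density a b x) \<partial>lborel)
           = ennreal (b powr q * Gamma (a - q) / Gamma a)"
proof -
  have "(\<integral>\<^sup>+x. ennreal (x powr q * ig_density a b x) \<partial>lborel) =
        (\<integral>\<^sup>+x. ennreal (b powr a / Gamma a) *
               ennreal (indicator {0<..} x * (x powr (-(a-q)-1) * exp (-b/x))) \<partial>lborel)"
  proof (rule nn_integral_cong)
    fix x :: real
    show "ennreal (x powr q * ig_density a b x) = ennreal (b powr a / Gamma a) *
            ennreal (indicator {0<..} x * (x powr (-(a-q)-1) * exp (-b/x)))"
    proof (cases "x > 0")
      case True
      have "x powr q * x powr (- a - 1) = x powr (-(a-q)-1)"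
        using True by (subst powr_add[symmetric]) (simp add: algebra_simps)
      then show ?thesis using True a b
        by (simp add: ig_density_def ennreal_mult'[symmetric] less_imp_le)
    qed (simp add: ig_density_def)
  qed
  also have "\<dots> = ennreal (b powr a / Gamma a) * ennreal (b powr (-(a-q)) * Gamma (a-q))"
    using nn_integral_inverse_gamma_kernel[of "a-q" b] a b q by (subst nn_integral_cmult) auto
  also have "\<dots> = ennreal (b powr q * Gamma (a - q) / Gamma a)"
    using a b q by (simp add: ennreal_mult'[symmetric] powr_add[symmetric] less_imp_le)
  finally show ?thesis .
qed

lemma nn_integral_ig_density:
  assumes "a > 0" and "b > 0"
  shows "(\<integral>\<^sup>+x. ennreal (ig_density a b x) \<partial>lborel) = 1"
proof -
  have "(\<integral>\<^sup>+x. ennreal (ig_density a b x) \<partial>lborel) = (\<integral>\<^sup>+x. ennreal (x powr 0 * ig_density a b x) \<partial>lborel)"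
    by (rule nn_integral_cong) (simp add: ig_density_def)
  also have "\<dots> = 1"
    using nn_integral_ig_density_moment[of a b 0] assms Gamma_real_pos[OF assms(1)]
    by (simp add: dual_order.strict_implies_not_eq)
  finally show ?thesis .
qed

lemma igauss_density_measurable [measurable]: "igauss_density m l \<in> borel_measurable borel"
  unfolding igauss_density_def[abs_def] by measurable

lemma igauss_density_nonneg: "l > 0 \<Longrightarrow> igauss_density m l x \<ge> 0"
  by (auto simp: igauss_density_def)

lemma igauss_density_pos: "m > 0 \<Longrightarrow> l > 0 \<Longrightarrow> x > 0 \<Longrightarrow> igauss_density m l x > 0"
  by (auto simp: igauss_density_def)

lemma igauss_density_eq:
  assumes "y > 0"
  shows "igauss_density m l y
           = sqrt l / sqrt (2 * pi) / (y * sqrt y) * exp (- l * (y - m)^2 / (2 * m^2 * y))"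
proof -
  have "sqrt (y^3) = y * sqrt y"
    using assms by (simp add: power3_eq_cube real_sqrt_mult)
  then show ?thesis
    using assms by (simp add: igauss_density_def real_sqrt_divide real_sqrt_mult field_simps)
qed

definition igauss_std :: "real \<Rightarrow> real \<Rightarrow> real \<Rightarrow> real" where
  "igauss_std m l y = sqrt l * (sqrt y / m - 1 / sqrt y)"

lemma igauss_std_has_derivative:
  assumes "m > 0" and "y > 0"
  shows "(igauss_std m l has_field_derivative sqrt l * (1 / (2 * m * sqrt y) + 1 / (2 * y * sqrt y)))
           (at y within S)"
  unfolding igauss_std_def[abs_def]
  using assms
  by (auto intro!: derivative_eq_intros simp: field_simps power2_eq_square)

lemma igauss_std_strict_mono:
  assumes "m > 0" and "l > 0"
  shows "strict_mono_on {0<..} (igauss_std m l)"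
proof (rule strict_mono_onI)
  fix y z :: real
  assume "y \<in> {0<..}" and "y < z"
  then have "sqrt y / m < sqrt z / m" and "1 / sqrt z < 1 / sqrt y"
    using assms by (auto simp: divide_strict_right_mono divide_strict_left_mono)
  then show "igauss_std m l y < igauss_std m l z"
    using assms by (simp add: igauss_std_def)
qed

lemma igauss_std_image:
  assumes m: "m > 0" and l: "l > 0"
  shows "igauss_std m l ` {0<..} = UNIV"
proof -
  have "t \<in> igauss_std m l ` {0<..}" for t
  proof -
    define c where "c = sqrt l"
    have c: "c > 0" "c * c = l"
      using l by (auto simp: c_def)
    define D where "D = sqrt (t^2 * m^2 + 4 * (c * c) * m)"
    have D: "D * D = t^2 * m^2 + 4 * (c * c) * m"
      using m c by (auto simp: D_def)
    have "\<bar>t * m\<bar> < D"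
      using m c by (auto simp: D_def power_mult_distrib intro!: real_less_rsqrt)
    then have "t * m + D > 0"
      by linarith
    \<comment> \<open>\<open>s\<close> is the positive root of \<open>c s\<^sup>2 - t m s - c m = 0\<close>.\<close>
    define s where "s = (t * m + D) / (2 * c)"
    have s: "s > 0"
      using \<open>t * m + D > 0\<close> c by (simp add: s_def)
    have root: "c * (s * s - m) = t * m * s"
      unfolding s_def using c D by (simp add: field_simps power2_eq_square)
    have "igauss_std m l (s * s) = c * (s * s - m) / (m * s)"
      using s m by (simp add: igauss_std_def c_def field_simps)
    also have "\<dots> = t"
      using root s m by simp
    finally show ?thesis
      using s by (intro image_eqI[of _ _ "s * s"]) auto
  qed
  then show ?thesis
    by blast
qed

lemma igauss_std_transforms_density:
  assumes m: "m > 0" and l: "l > 0" and y: "y > 0"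
  shows "sqrt l * (1 / (2 * m * sqrt y) + 1 / (2 * y * sqrt y)) * std_normal_density (igauss_std m l y)
           = (igauss_density m l y + y / m * igauss_density m l y) / 2"
proof -
  define s where "s = sqrt y"
  have s: "s > 0" "y = s * s"
    using y by (auto simp: s_def)
  have "- (igauss_std m l y)\<^sup>2 / 2 = - l * (y - m)^2 / (2 * m^2 * y)"
    using s m l by (simp add: igauss_std_def field_simps power2_eq_square)
  then show ?thesis
    unfolding std_normal_density_def igauss_density_eq[OF y]
    using s m by (simp add: field_simps power2_eq_square)
qed

lemma igauss_density_reflect:
  assumes m: "m > 0" and y: "y > 0"
  shows "\<bar>- (m^2) / y^2\<bar> * igauss_density m l (m^2 / y) = y / m * igauss_density m l y"
proof -
  define s where "s = sqrt y"
  have s: "s > 0" "y = s * s"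
    using y by (auto simp: s_def)
  have "- l * (m^2 / y - m)^2 / (2 * m^2 * (m^2 / y)) = - l * (y - m)^2 / (2 * m^2 * y)"
    using m y by (simp add: field_simps power2_eq_square)
  moreover have "sqrt (m^2 / y) = m / s"
    using m s by (simp add: real_sqrt_divide)
  moreover have "m^2 / y > 0"
    using m y by simp
  ultimately show ?thesis
    unfolding igauss_density_eq[OF y] igauss_density_eq[OF \<open>m^2 / y > 0\<close>]
    using s m by (simp add: field_simps power2_eq_square)
qed

text \<open>The substitution \<open>u = igauss_std m l y\<close> carries the average of the IGauss density \<open>f\<close> and
  its size-biased version \<open>y f(y) / m\<close> to the standard normal density, and the reflection
  \<open>y \<mapsto> m\<^sup>2 / y\<close> exchanges these two, so both integrate to one.\<close>

lemma igauss_density_add_size_biased_has_integral: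
  assumes m: "m > 0" and l: "l > 0"
  shows "((\<lambda>y. igauss_density m l y + y / m * igauss_density m l y) has_integral 2) {0<..}"
proof -
  let ?u' = "\<lambda>y. sqrt l * (1 / (2 * m * sqrt y) + 1 / (2 * y * sqrt y))"
  let ?S = "{0<..} :: real set"
  have "(std_normal_density has_integral integral\<^sup>L lborel std_normal_density) UNIV"
    by (rule has_integral_integral_lborel) simp
  then have "std_normal_density absolutely_integrable_on igauss_std m l ` ?S \<and>
      integral (igauss_std m l ` ?S) std_normal_density = 1"
    unfolding igauss_std_image[OF m l]
    by (auto intro!: nonnegative_absolutely_integrable_1 simp: has_integral_integrable integral_unique)
  moreover have "(\<lambda>y. \<bar>?u' y\<bar> * std_normal_density (igauss_std m l y)) absolutely_integrable_on ?S \<and>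
      integral ?S (\<lambda>y. \<bar>?u' y\<bar> * std_normal_density (igauss_std m l y)) = 1 \<longleftrightarrow>
    std_normal_density absolutely_integrable_on igauss_std m l ` ?S \<and>
      integral (igauss_std m l ` ?S) std_normal_density = 1"
  proof (rule has_absolute_integral_change_of_variables_1')
    show "(igauss_std m l has_field_derivative ?u' y) (at y within ?S)" if "y \<in> ?S" for y
      using that by (simp add: igauss_std_has_derivative m)
    show "inj_on (igauss_std m l) ?S"
      by (rule strict_mono_on_imp_inj_on[OF igauss_std_strict_mono[OF m l]])
  qed simp
  ultimately have "((\<lambda>y. \<bar>?u' y\<bar> * std_normal_density (igauss_std m l y)) has_integral 1) ?S"
    using set_lebesgue_integral_eq_integral(1)[THEN integrable_integral] by fastforce
  from has_integral_mult_right[OF this, of 2, unfolded mult_1_right]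
  show ?thesis
    by (rule has_integral_eq[rotated]) (use m l in \<open>simp add: igauss_std_transforms_density\<close>)
qed

lemma integral_igauss_size_biased:
  assumes m: "m > 0" and f: "igauss_density m l absolutely_integrable_on {0<..}"
  shows "integral {0<..} (\<lambda>y. y / m * igauss_density m l y) = integral {0<..} (igauss_density m l)"
proof -
  let ?f = "igauss_density m l" and ?S = "{0<..} :: real set"
  have image: "(\<lambda>y. m^2 / y) ` ?S = ?S"
  proof safe
    fix x :: real assume "x > 0"
    then show "x \<in> (\<lambda>y. m^2 / y) ` ?S"
      using m by (intro image_eqI[of _ _ "m^2 / x"]) auto
  qed (use m in auto)
  have "(\<lambda>y. \<bar>- (m^2) / y^2\<bar> * ?f (m^2 / y)) absolutely_integrable_on ?S \<and>
      integral ?S (\<lambda>y. \<bar>- (m^2) / y^2\<bar> * ?f (m^2 / y)) = integral ?S ?f \<longleftrightarrow>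
    ?f absolutely_integrable_on (\<lambda>y. m^2 / y) ` ?S \<and>
      integral ((\<lambda>y. m^2 / y) ` ?S) ?f = integral ?S ?f"
  proof (rule has_absolute_integral_change_of_variables_1')
    show "((\<lambda>y. m^2 / y) has_field_derivative - (m^2) / y^2) (at y within ?S)" if "y \<in> ?S" for y
      using that by (auto intro!: derivative_eq_intros simp: power2_eq_square)
    show "inj_on (\<lambda>y. m^2 / y) ?S"
      using m by (auto intro!: inj_onI)
  qed simp
  then have "integral ?S (\<lambda>y. \<bar>- (m^2) / y^2\<bar> * ?f (m^2 / y)) = integral ?S ?f"
    using f unfolding image by blast
  moreover have "integral ?S (\<lambda>y. \<bar>- (m^2) / y^2\<bar> * ?f (m^2 / y)) = integral ?S (\<lambda>y. y / m * ?f y)"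
    by (rule integral_cong, rule igauss_density_reflect[OF m]) simp
  ultimately show ?thesis
    by simp
qed

lemma nn_integral_igauss_density:
  assumes m: "m > 0" and l: "l > 0"
  shows "(\<integral>\<^sup>+x. ennreal (igauss_density m l x) \<partial>lborel) = 1"
proof -
  let ?f = "igauss_density m l" and ?g = "\<lambda>y. y / m * igauss_density m l y"
  let ?S = "{0<..} :: real set"
  note sum = igauss_density_add_size_biased_has_integral[OF m l]
  have lebesgue_on_measurable: "h \<in> borel_measurable (lebesgue_on ?S)"
    if "h \<in> borel_measurable borel" for h :: "real \<Rightarrow> real"
    by (intro measurable_restrict_space1 measurable_completion) (simp add: that)
  have bounds: "norm (?f y) \<le> ?f y + ?g y" "norm (?g y) \<le> ?f y + ?g y" if "y \<in> ?S" for y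
    using that m igauss_density_nonneg[OF l, of m y] by auto
  have f: "?f absolutely_integrable_on ?S"
    by (rule measurable_bounded_by_integrable_imp_absolutely_integrable
          [OF _ _ has_integral_integrable[OF sum] bounds(1)]) (auto intro: lebesgue_on_measurable)
  have g: "?g absolutely_integrable_on ?S"
    by (rule measurable_bounded_by_integrable_imp_absolutely_integrable
          [OF _ _ has_integral_integrable[OF sum] bounds(2)]) (auto intro: lebesgue_on_measurable)
  have "integral ?S ?f + integral ?S ?g = 2"
    using integral_add[OF f[THEN set_lebesgue_integral_eq_integral(1)]
        g[THEN set_lebesgue_integral_eq_integral(1)]] integral_unique[OF sum]
    by simp
  moreover have "integral ?S ?g = integral ?S ?f"
    by (rule integral_igauss_size_biased[OF m f])
  ultimately have "(?f has_integral 1) ?S"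
    using f[THEN set_lebesgue_integral_eq_integral(1), THEN integrable_integral] by simp
  then have "(\<integral>\<^sup>+x. ennreal (indicator ?S x * ?f x) \<partial>lborel) = ennreal 1"
    by (intro nn_integral_has_integral_lebesgue) (use l in \<open>auto simp: igauss_density_nonneg\<close>)
  moreover have "indicator ?S x * ?f x = ?f x" for x
    by (auto simp: indicator_def igauss_density_def)
  ultimately show ?thesis
    by simp
qed

lemma nn_integral_finite_if_le_inverse_gamma_kernel:
  fixes h :: "real \<Rightarrow> real"
  assumes r: "r > 0" and b: "b > 0" and K: "K \<ge> 0"
    and le: "\<And>x. x > 0 \<Longrightarrow> h x \<le> K * (x powr (-r-1) * exp (-b/x))"
    and nonpos: "\<And>x. x \<le> 0 \<Longrightarrow> h x \<le> 0"
  shows "(\<integral>\<^sup>+x. ennreal (h x) \<partial>lborel) < \<infinity>"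
proof -
  have "(\<integral>\<^sup>+x. ennreal (h x) \<partial>lborel)
      \<le> (\<integral>\<^sup>+x. ennreal K * ennreal (indicator {0<..} x * (x powr (-r-1) * exp (-b/x))) \<partial>lborel)"
  proof (rule nn_integral_mono)
    fix x :: real
    show "ennreal (h x) \<le> ennreal K * ennreal (indicator {0<..} x * (x powr (-r-1) * exp (-b/x)))"
      using le[of x] nonpos[of x] K
      by (cases "x > 0") (auto simp: ennreal_mult'[symmetric] ennreal_leI ennreal_neg)
  qed
  also have "\<dots> = ennreal K * ennreal (b powr (-r) * Gamma r)"
    using nn_integral_inverse_gamma_kernel[OF r b] by (subst nn_integral_cmult) auto
  finally show ?thesis
    by (simp add: ennreal_mult_less_top order.strict_trans1)
qed

lemma igauss_density_factor:
  assumes m: "m > 0" and x: "x > 0"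
  shows "igauss_density m l x = sqrt l / sqrt (2 * pi) * exp (l / m) *
           (x powr (-(1/2)-1) * exp (-(l/2) / x)) * exp (-(l / (2 * m^2)) * x)"
proof -
  have "x powr (1 + 1/2) = x * sqrt x"
    using x by (simp only: powr_add powr_one powr_half_sqrt less_imp_le)
  then have "x powr (-(1/2)-1) = 1 / (x * sqrt x)"
    by (simp add: powr_minus_divide)
  moreover have "- l * (x - m)^2 / (2 * m^2 * x) = l / m + -(l/2) / x + -(l / (2 * m^2)) * x"
    using m x by (simp add: field_simps power2_eq_square)
  then have "exp (- l * (x - m)^2 / (2 * m^2 * x))
      = exp (l / m) * exp (-(l/2) / x) * exp (-(l / (2 * m^2)) * x)"
    by (simp only: exp_add)
  ultimately show ?thesis
    unfolding igauss_density_eq[OF x] by simp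
qed

lemma igauss_density_moment_finite:
  assumes m: "m > 0" and l: "l > 0" and r: "r \<ge> 0" and \<kappa>: "\<kappa> \<le> l / (2 * m^2)"
  shows "(\<integral>\<^sup>+x. ennreal (x powr (-r) * exp (\<kappa> * x) * igauss_density m l x) \<partial>lborel) < \<infinity>"
proof (rule nn_integral_finite_if_le_inverse_gamma_kernel[of "r + 1/2" "l/2" "sqrt l / sqrt (2 * pi) * exp (l / m)"])
  fix x :: real
  assume x: "x > 0"
  have powr: "x powr (-(r + 1/2) - 1) = x powr (-r) * x powr (-(1/2)-1)"
    by (subst powr_add[symmetric]) (simp add: algebra_simps)
  have exp: "exp ((\<kappa> - l / (2 * m^2)) * x) = exp (\<kappa> * x) * exp (-(l / (2 * m^2)) * x)"
    by (simp add: left_diff_distrib flip: exp_add)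
  have "x powr (-r) * exp (\<kappa> * x) * igauss_density m l x
      = sqrt l / sqrt (2 * pi) * exp (l / m) * (x powr (-(r + 1/2) - 1) * exp (-(l/2) / x)) *
        exp ((\<kappa> - l / (2 * m^2)) * x)"
    unfolding igauss_density_factor[OF m x] powr exp by (simp only: mult_ac)
  also have "\<dots> \<le> sqrt l / sqrt (2 * pi) * exp (l / m) * (x powr (-(r + 1/2) - 1) * exp (-(l/2) / x))"
    using x \<kappa> l by (intro mult_left_le) (auto simp: mult_le_0_iff)
  finally show "x powr (-r) * exp (\<kappa> * x) * igauss_density m l x
      \<le> sqrt l / sqrt (2 * pi) * exp (l / m) * (x powr (-(r + 1/2) - 1) * exp (-(l/2) / x))" .
qed (use l r in \<open>simp_all add: igauss_density_def\<close>)

lemma continuous_on_ig_density: "continuous_on {0<..} (ig_density a b)"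
proof (rule continuous_on_eq)
  show "continuous_on {0<..} (\<lambda>x. b powr a / Gamma a * x powr (-a-1) * exp (-b/x))"
    by (intro continuous_intros) auto
qed (simp add: ig_density_def)

lemma continuous_on_igauss_density:
  assumes "m > 0"
  shows "continuous_on {0<..} (igauss_density m l)"
proof (rule continuous_on_eq)
  show "continuous_on {0<..}
      (\<lambda>x. sqrt (l / (2 * pi * x ^ 3)) * exp (- l * (x - m)^2 / (2 * m^2 * x)))"
    using assms by (intro continuous_intros) auto
qed (simp add: igauss_density_def)

section \<open>Normal densities\<close>

lemma nn_integral_normal_density:
  assumes "\<sigma> > 0"
  shows "(\<integral>\<^sup>+x. ennreal (normal_density \<mu> \<sigma> x) \<partial>lborel) = 1"
  using assms by (subst nn_integral_eq_integral) auto

lemma nn_integral_exp_square_normal_density: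
  assumes \<sigma>: "\<sigma> > 0"
  shows "(\<integral>\<^sup>+y. ennreal (exp (y^2 / (4 * \<sigma>^2)) * normal_density 0 \<sigma> y) \<partial>lborel) = ennreal (sqrt 2)"
proof -
  have "exp (y^2 / (4 * \<sigma>^2)) * normal_density 0 \<sigma> y = sqrt 2 * normal_density 0 (sqrt 2 * \<sigma>) y" for y
  proof -
    have "y^2 / (4 * \<sigma>^2) + - (y - 0)\<^sup>2 / (2 * \<sigma>^2) = - (y - 0)\<^sup>2 / (2 * (sqrt 2 * \<sigma>)^2)"
      using \<sigma> by (simp add: field_simps)
    then show ?thesis
      using \<sigma> by (simp add: normal_density_def real_sqrt_mult field_simps
                    flip: exp_add)
  qed
  then have "(\<integral>\<^sup>+y. ennreal (exp (y^2 / (4 * \<sigma>^2)) * normal_density 0 \<sigma> y) \<partial>lborel)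
      = (\<integral>\<^sup>+y. ennreal (sqrt 2) * ennreal (normal_density 0 (sqrt 2 * \<sigma>) y) \<partial>lborel)"
    by (simp add: ennreal_mult)
  also have "\<dots> = ennreal (sqrt 2)"
    using \<sigma> by (simp add: nn_integral_cmult nn_integral_normal_density)
  finally show ?thesis .
qed

lemma nn_integral_prod_components:
  fixes h :: "real \<Rightarrow> real"
  assumes [measurable]: "h \<in> borel_measurable borel" and nonneg: "\<And>x. h x \<ge> 0"
  shows "(\<integral>\<^sup>+x. ennreal (\<Prod>i\<in>UNIV. h ((x :: real ^ 'n::finite) $ i)) \<partial>lborel)
           = (\<integral>\<^sup>+x. ennreal (h x) \<partial>lborel) ^ CARD('n)"
proof -
  have "ennreal (\<Prod>i\<in>UNIV. h (x $ i)) = (\<Prod>b\<in>Basis. ennreal (h (x \<bullet> b)))" for x :: "real ^ 'n"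
  proof -
    have "(\<Prod>b\<in>Basis. ennreal (h (x \<bullet> b))) = (\<Prod>b\<in>range (\<lambda>i. axis i 1). ennreal (h (x \<bullet> b)))"
      by (rule prod.cong) (auto simp: Basis_vec_def)
    also have "\<dots> = (\<Prod>i\<in>UNIV. ennreal (h (x \<bullet> axis i 1)))"
      by (subst prod.reindex) (auto simp: inj_on_def axis_eq_axis)
    finally show ?thesis
      by (simp add: cart_eq_inner_axis prod_ennreal nonneg)
  qed
  then have "(\<integral>\<^sup>+x. ennreal (\<Prod>i\<in>UNIV. h ((x :: real ^ 'n) $ i)) \<partial>lborel)
      = (\<integral>\<^sup>+x. (\<Prod>b\<in>Basis. ennreal (h (x \<bullet> b))) \<partial>(lborel :: (real ^ 'n) measure))"
    by simp
  also have "\<dots> = (\<Prod>b\<in>(Basis :: (real ^ 'n) set). \<integral>\<^sup>+x. ennreal (h x) \<partial>lborel)"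
    by (rule nn_integral_lborel_prod) auto
  finally show ?thesis
    by simp
qed

definition normal_vec_density :: "real \<Rightarrow> real ^ 'n::finite \<Rightarrow> real" where
  "normal_vec_density \<sigma> x = (\<Prod>i\<in>UNIV. normal_density 0 \<sigma> (x $ i))"

lemma normal_vec_density_measurable [measurable]: "normal_vec_density \<sigma> \<in> borel_measurable borel"
  unfolding normal_vec_density_def[abs_def] by measurable

lemma normal_vec_density_nonneg: "normal_vec_density \<sigma> x \<ge> 0"
  unfolding normal_vec_density_def by (intro prod_nonneg) auto

lemma normal_vec_density_pos: "\<sigma> > 0 \<Longrightarrow> normal_vec_density \<sigma> x > 0"
  unfolding normal_vec_density_def by (intro prod_pos) (auto intro: normal_density_pos)

lemma nn_integral_normal_vec_density:
  "\<sigma> > 0 \<Longrightarrow> (\<integral>\<^sup>+x. ennreal (normal_vec_density \<sigma> (x :: real ^ 'n::finite)) \<partial>lborel) = 1"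
  unfolding normal_vec_density_def
  by (subst nn_integral_prod_components) (auto simp: nn_integral_normal_density)

lemma nn_integral_exp_norm_normal_vec_density:
  assumes "\<sigma> > 0"
  shows "(\<integral>\<^sup>+x. ennreal (exp ((norm x)^2 / (4 * \<sigma>^2)) * normal_vec_density \<sigma> (x :: real ^ 'n::finite)) \<partial>lborel)
           = ennreal (sqrt 2) ^ CARD('n)"
proof -
  have "exp ((norm x)^2 / (4 * \<sigma>^2)) * normal_vec_density \<sigma> x
      = (\<Prod>i\<in>UNIV. exp ((x $ i)^2 / (4 * \<sigma>^2)) * normal_density 0 \<sigma> (x $ i))" for x :: "real ^ 'n"
    by (simp add: normal_vec_density_def norm_vec_def L2_set_def sum_nonneg sum_divide_distrib
                  exp_sum prod.distrib)
  then show ?thesis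
    using assms nn_integral_prod_components[of "\<lambda>y. exp (y^2 / (4 * \<sigma>^2)) * normal_density 0 \<sigma> y"]
    by (simp add: nn_integral_exp_square_normal_density)
qed

lemma continuous_on_normal_vec_density:
  "\<sigma> > 0 \<Longrightarrow> continuous_on S (normal_vec_density \<sigma>)"
  unfolding normal_vec_density_def[abs_def] normal_density_def by (intro continuous_intros) auto

lemma nn_integral_lborel_mult_fst_snd:
  fixes f :: "'a::euclidean_space \<Rightarrow> ennreal" and g :: "'b::euclidean_space \<Rightarrow> ennreal"
  assumes [measurable]: "f \<in> borel_measurable borel" "g \<in> borel_measurable borel"
  shows "(\<integral>\<^sup>+x. f (fst x) * g (snd x) \<partial>lborel) = (\<integral>\<^sup>+x. f x \<partial>lborel) * (\<integral>\<^sup>+x. g x \<partial>lborel)"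
proof -
  have "(\<integral>\<^sup>+x. f (fst x) * g (snd x) \<partial>lborel) = (\<integral>\<^sup>+x. f (fst x) * g (snd x) \<partial>(lborel \<Otimes>\<^sub>M lborel))"
    by (simp add: lborel_prod)
  also have "\<dots> = (\<integral>\<^sup>+x. \<integral>\<^sup>+y. f x * g y \<partial>lborel \<partial>lborel)"
    by (subst lborel.nn_integral_fst[symmetric]) auto
  also have "\<dots> = (\<integral>\<^sup>+x. f x \<partial>lborel) * (\<integral>\<^sup>+x. g x \<partial>lborel)"
    by (simp add: nn_integral_cmult nn_integral_multc)
  finally show ?thesis .
qed

lemma nn_integral_param_mult:
  fixes f1 f2 f3 :: "real \<Rightarrow> ennreal" and g :: "real ^ 'p::finite \<Rightarrow> ennreal"
  assumes [measurable]: "f1 \<in> borel_measurable borel" "f2 \<in> borel_measurable borel"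
    "f3 \<in> borel_measurable borel" "g \<in> borel_measurable borel"
  shows "(\<integral>\<^sup>+x. f1 (fst x) * f2 (fst (snd x)) * f3 (fst (snd (snd x))) * g (snd (snd (snd x)))
             \<partial>(lborel :: 'p param measure))
         = (\<integral>\<^sup>+x. f1 x \<partial>lborel) * (\<integral>\<^sup>+x. f2 x \<partial>lborel) * (\<integral>\<^sup>+x. f3 x \<partial>lborel) * (\<integral>\<^sup>+x. g x \<partial>lborel)"
proof -
  let ?G3 = "\<lambda>z :: real \<times> (real ^ 'p). f3 (fst z) * g (snd z)"
  let ?G2 = "\<lambda>y :: real \<times> real \<times> (real ^ 'p). f2 (fst y) * ?G3 (snd y)"
  have [measurable]: "?G3 \<in> borel_measurable borel" "?G2 \<in> borel_measurable borel"
    by (simp_all only: borel_prod[symmetric]) measurable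
  have "(\<integral>\<^sup>+x. f1 (fst x) * f2 (fst (snd x)) * f3 (fst (snd (snd x))) * g (snd (snd (snd x)))
          \<partial>(lborel :: 'p param measure)) = (\<integral>\<^sup>+x. f1 (fst x) * ?G2 (snd x) \<partial>lborel)"
    by (simp add: mult.assoc)
  also have "\<dots> = (\<integral>\<^sup>+x. f1 x \<partial>lborel) * (\<integral>\<^sup>+y. ?G2 y \<partial>lborel)"
    by (rule nn_integral_lborel_mult_fst_snd) measurable
  also have "(\<integral>\<^sup>+y. ?G2 y \<partial>lborel) = (\<integral>\<^sup>+x. f2 x \<partial>lborel) * (\<integral>\<^sup>+z. ?G3 z \<partial>lborel)"
    by (rule nn_integral_lborel_mult_fst_snd) measurable
  also have "(\<integral>\<^sup>+z. ?G3 z \<partial>lborel) = (\<integral>\<^sup>+x. f3 x \<partial>lborel) * (\<integral>\<^sup>+x. g x \<partial>lborel)"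
    by (rule nn_integral_lborel_mult_fst_snd) measurable
  finally show ?thesis
    by (simp add: mult.assoc)
qed

lemma prior_density_eq:
  "prior_density a0 a1 b1 a2 b2 \<mu> lam x =
     ig_density a1 b1 (fst x) * igauss_density \<mu> lam (fst (snd x)) *
     ig_density a2 b2 (fst (snd (snd x))) * normal_vec_density (sqrt a0) (snd (snd (snd x)))"
  by (simp add: prior_density_def normal_vec_density_def split_beta)

lemma prior_density_measurable [measurable]:
  "prior_density a0 a1 b1 a2 b2 \<mu> lam \<in> borel_measurable borel"
  unfolding prior_density_eq[abs_def] by (simp only: borel_prod[symmetric]) measurable

section \<open>Tail bounds from Markov's inequality\<close>

lemma smallo_measure_if_Markov_bound:
  fixes M :: "'a measure" and w :: "'a \<Rightarrow> real" and T :: "'b \<Rightarrow> 'a set" and c g :: "'b \<Rightarrow> real"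
  assumes [measurable]: "w \<in> borel_measurable M"
    and w_nonneg: "\<And>x. x \<in> space M \<Longrightarrow> 0 \<le> w x"
    and finite: "(\<integral>\<^sup>+x. ennreal (w x) \<partial>M) < \<infinity>"
    and [measurable]: "\<And>n. T n \<in> sets M"
    and bound: "\<forall>\<^sub>F n in F. \<forall>x\<in>T n. 1 \<le> c n * w x"
    and c: "c \<in> o[F](g)"
  shows "(\<lambda>n. measure M (T n)) \<in> o[F](g)"
proof -
  obtain K where K: "(\<integral>\<^sup>+x. ennreal (w x) \<partial>M) = ennreal K" "K \<ge> 0"
    using finite by (cases "\<integral>\<^sup>+x. ennreal (w x) \<partial>M") auto
  have "measure M (T n) \<le> K * \<bar>c n\<bar>" if "\<forall>x\<in>T n. 1 \<le> c n * w x" for n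
  proof -
    have "emeasure M (T n) = (\<integral>\<^sup>+x. indicator (T n) x \<partial>M)"
      by simp
    also have "\<dots> \<le> (\<integral>\<^sup>+x. ennreal \<bar>c n\<bar> * ennreal (w x) \<partial>M)"
    proof (rule nn_integral_mono)
      fix x assume "x \<in> space M"
      have "1 \<le> \<bar>c n\<bar> * w x" if "x \<in> T n"
        using \<open>\<forall>x\<in>T n. 1 \<le> c n * w x\<close> that w_nonneg[OF \<open>x \<in> space M\<close>]
        by (meson abs_ge_self mult_right_mono order_trans)
      then show "indicator (T n) x \<le> ennreal \<bar>c n\<bar> * ennreal (w x)"
        by (auto simp: indicator_def ennreal_mult'[symmetric] simp flip: ennreal_1 intro!: ennreal_leI)
    qed
    also have "\<dots> = ennreal \<bar>c n\<bar> * ennreal K"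
      by (simp add: nn_integral_cmult K)
    also have "\<dots> = ennreal (K * \<bar>c n\<bar>)"
      using K by (simp add: ennreal_mult mult.commute)
    finally have "emeasure M (T n) \<le> ennreal (K * \<bar>c n\<bar>)" .
    then show ?thesis
      unfolding measure_def using K by (intro enn2real_leI) simp_all
  qed
  with bound have "(\<lambda>n. measure M (T n)) \<in> O[F](c)"
    by (intro bigoI[where c = K]) (auto elim!: eventually_mono)
  then show ?thesis
    using c by (rule landau_o.big_small_trans)
qed

lemma smallo_measure_Un:
  assumes "\<And>n. A n \<in> sets M" and "\<And>n. B n \<in> sets M"
    and "(\<lambda>n. measure M (A n)) \<in> o[F](g)" and "(\<lambda>n. measure M (B n)) \<in> o[F](g)"
  shows "(\<lambda>n. measure M (A n \<union> B n)) \<in> o[F](g)"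
proof -
  have "(\<lambda>n. measure M (A n \<union> B n)) \<in> O[F](\<lambda>n. measure M (A n) + measure M (B n))"
    using assms(1,2) by (intro bigoI[where c = 1]) (simp add: measure_Un_le)
  then show ?thesis
    using sum_in_smallo(1)[OF assms(3,4)] by (rule landau_o.big_small_trans)
qed

lemma real_powr_neg_smallo: "E < a \<Longrightarrow> (\<lambda>n::nat. real n powr -a) \<in> o(\<lambda>n. real n powr -E)"
  by real_asymp

lemma smallo_measure_lower_tail:
  fixes X :: "'a \<Rightarrow> real"
  assumes [measurable]: "X \<in> borel_measurable M" and r: "r > 0"
    and moments: "\<And>R. R > 0 \<Longrightarrow> (\<integral>\<^sup>+x. ennreal (X x powr (-R)) \<partial>M) < \<infinity>"
  shows "(\<lambda>n. measure M {x \<in> space M. 0 < X x \<and> X x < real n powr (-r)}) \<in> o(\<lambda>n. real n powr (-E))"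
proof (rule smallo_measure_if_Markov_bound)
  define R where "R = (\<bar>E\<bar> + 1) / r"
  have R: "R > 0" "r * R = \<bar>E\<bar> + 1"
    using r by (auto simp: R_def add_pos_nonneg)
  show "(\<integral>\<^sup>+x. ennreal (X x powr (-R)) \<partial>M) < \<infinity>"
    using moments[OF R(1)] .
  show "(\<lambda>n. real n powr -(\<bar>E\<bar> + 1)) \<in> o(\<lambda>n. real n powr -E)"
    by (rule real_powr_neg_smallo) simp
  show "\<forall>\<^sub>F n in sequentially. \<forall>x\<in>{x \<in> space M. 0 < X x \<and> X x < real n powr (-r)}.
      1 \<le> real n powr -(\<bar>E\<bar> + 1) * X x powr (-R)"
    using eventually_gt_at_top[of 0]
  proof eventually_elim
    case (elim n)
    show ?case
    proof safe
      fix x assume "0 < X x" "X x < real n powr (-r)"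
      then have "(real n powr (-r)) powr (-R) < X x powr (-R)"
        using R by (intro powr_less_mono2_neg) auto
      then have "real n powr (\<bar>E\<bar> + 1) \<le> X x powr (-R)"
        using R by (simp add: powr_powr add.commute)
      then have "real n powr -(\<bar>E\<bar> + 1) * real n powr (\<bar>E\<bar> + 1) \<le> real n powr -(\<bar>E\<bar> + 1) * X x powr (-R)"
        by (rule mult_left_mono) simp
      then show "1 \<le> real n powr -(\<bar>E\<bar> + 1) * X x powr (-R)"
        using elim by (simp flip: powr_add)
    qed
  qed
qed auto

lemma smallo_measure_upper_tail:
  fixes X :: "'a \<Rightarrow> real"
  assumes [measurable]: "X \<in> borel_measurable M" and Q: "Q > 0" and E: "E < r * Q"
    and moment: "(\<integral>\<^sup>+x. ennreal (X x powr Q) \<partial>M) < \<infinity>"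
  shows "(\<lambda>n. measure M {x \<in> space M. real n powr r < X x}) \<in> o(\<lambda>n. real n powr (-E))"
proof (rule smallo_measure_if_Markov_bound[OF _ _ moment])
  show "(\<lambda>n. real n powr -(r * Q)) \<in> o(\<lambda>n. real n powr -E)"
    using E by (rule real_powr_neg_smallo)
  show "\<forall>\<^sub>F n in sequentially. \<forall>x\<in>{x \<in> space M. real n powr r < X x}.
      1 \<le> real n powr -(r * Q) * X x powr Q"
    using eventually_gt_at_top[of 0]
  proof eventually_elim
    case (elim n)
    show ?case
    proof safe
      fix x assume "real n powr r < X x"
      then have "(real n powr r) powr Q < X x powr Q"
        using Q by (intro powr_less_mono2) auto
      then have "real n powr -(r * Q) * real n powr (r * Q) \<le> real n powr -(r * Q) * X x powr Q"
        by (intro mult_left_mono) (simp_all add: powr_powr)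
      then show "1 \<le> real n powr -(r * Q) * X x powr Q"
        using elim by (simp flip: powr_add)
    qed
  qed
qed auto

lemma smallo_measure_exp_tail:
  fixes X :: "'a \<Rightarrow> real"
  assumes [measurable]: "X \<in> borel_measurable M" and \<kappa>: "\<kappa> > 0" and r: "r > 0"
    and moment: "(\<integral>\<^sup>+x. ennreal (exp (\<kappa> * X x)) \<partial>M) < \<infinity>"
  shows "(\<lambda>n. measure M {x \<in> space M. real n powr r < X x}) \<in> o(\<lambda>n. real n powr (-E))"
proof (rule smallo_measure_if_Markov_bound[OF _ _ moment])
  show "(\<lambda>n. exp (- (\<kappa> * real n powr r))) \<in> o(\<lambda>n. real n powr -E)"
    using \<kappa> r by real_asymp
  show "\<forall>\<^sub>F n in sequentially. \<forall>x\<in>{x \<in> space M. real n powr r < X x}.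
      1 \<le> exp (- (\<kappa> * real n powr r)) * exp (\<kappa> * X x)"
    using \<kappa> by (auto simp flip: exp_add)
qed auto

section \<open>Covering the complement of the sieve\<close>

lemma sieve_condition_cases:
  fixes N \<theta> \<alpha> \<tau> B \<rho>1 \<rho>21 \<rho>22 \<rho>31 \<rho>32 :: real
  assumes N: "N > 0" and \<theta>: "\<theta> > 0" and \<tau>: "\<tau> > 0" and B: "B \<ge> 0"
    and not_sieve: "\<not> (B / \<theta> \<le> N powr \<rho>1 \<and> N powr (-\<rho>21) \<le> \<tau> / \<theta> \<and> \<tau> / \<theta> \<le> N powr \<rho>22 \<and>
                       N powr (-\<rho>31) \<le> \<alpha> \<and> \<alpha> \<le> N powr \<rho>32)"
  shows "\<theta> < N powr -(\<rho>1/2) \<or> N powr (\<rho>1/2) < B \<or> N powr (\<rho>21/2) < \<theta> \<or> \<tau> < N powr -(\<rho>21/2) \<or>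
         \<theta> < N powr -(\<rho>22/2) \<or> N powr (\<rho>22/2) < \<tau> \<or> \<alpha> < N powr -\<rho>31 \<or> N powr \<rho>32 < \<alpha>"
proof (rule ccontr)
  assume "\<not> ?thesis"
  then have h: "N powr -(\<rho>1/2) \<le> \<theta>" "B \<le> N powr (\<rho>1/2)" "\<theta> \<le> N powr (\<rho>21/2)" "N powr -(\<rho>21/2) \<le> \<tau>"
    "N powr -(\<rho>22/2) \<le> \<theta>" "\<tau> \<le> N powr (\<rho>22/2)" "N powr -\<rho>31 \<le> \<alpha>" "\<alpha> \<le> N powr \<rho>32"
    by auto
  have "B / \<theta> \<le> N powr (\<rho>1/2) / N powr -(\<rho>1/2)"
    using h B N by (intro frac_le) auto
  moreover have "N powr -(\<rho>21/2) / N powr (\<rho>21/2) \<le> \<tau> / \<theta>"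
    using h \<theta> \<tau> N by (intro frac_le) auto
  moreover have "\<tau> / \<theta> \<le> N powr (\<rho>22/2) / N powr -(\<rho>22/2)"
    using h \<tau> N by (intro frac_le) auto
  ultimately show False
    using not_sieve h(7,8) N by (simp flip: powr_diff)
qed

text \<open>The first set is a null set of the prior; each of the others bounds a single coordinate.\<close>

definition sieve_tails :: "real \<Rightarrow> real \<Rightarrow> real \<Rightarrow> real \<Rightarrow> real \<Rightarrow> nat \<Rightarrow> ('p::finite) param set" where
  "sieve_tails \<rho>1 \<rho>21 \<rho>22 \<rho>31 \<rho>32 n =
     {x. \<not> (0 < fst x \<and> 0 < fst (snd x) \<and> 0 < fst (snd (snd x)))} \<union>
     {x. 0 < fst x \<and> fst x < real n powr -(\<rho>1/2)} \<union>
     {x. real n powr (\<rho>1/2) < (norm (snd (snd (snd x))))^2} \<union>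
     {x. real n powr (\<rho>21/2) < fst x} \<union>
     {x. 0 < fst (snd (snd x)) \<and> fst (snd (snd x)) < real n powr -(\<rho>21/2)} \<union>
     {x. 0 < fst x \<and> fst x < real n powr -(\<rho>22/2)} \<union>
     {x. real n powr (\<rho>22/2) < fst (snd (snd x))} \<union>
     {x. 0 < fst (snd x) \<and> fst (snd x) < real n powr -\<rho>31} \<union>
     {x. real n powr \<rho>32 < fst (snd x)}"

lemma sieve_complement_subset_tails:
  assumes "n > 0"
  shows "UNIV - sieve_E \<rho>1 \<rho>21 \<rho>22 \<rho>31 \<rho>32 n \<subseteq> sieve_tails \<rho>1 \<rho>21 \<rho>22 \<rho>31 \<rho>32 n"
proof
  fix x :: "'p::finite param"
  assume "x \<in> UNIV - sieve_E \<rho>1 \<rho>21 \<rho>22 \<rho>31 \<rho>32 n"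
  then show "x \<in> sieve_tails \<rho>1 \<rho>21 \<rho>22 \<rho>31 \<rho>32 n"
    using sieve_condition_cases[where N = "real n" and \<theta> = "fst x" and \<alpha> = "fst (snd x)"
        and \<tau> = "fst (snd (snd x))" and B = "(norm (snd (snd (snd x))))^2"] assms
    by (auto simp: sieve_E_def sieve_tails_def split_beta)
qed

section \<open>The prior\<close>

locale product_prior =
  fixes a0 a1 b1 a2 b2 \<mu> lam :: real
  assumes a0: "a0 > 0" and a1: "a1 > 0" and b1: "b1 > 0" and a2: "a2 > 0" and b2: "b2 > 0"
    and \<mu>: "\<mu> > 0" and lam: "lam > 0"
begin

definition prior :: "'p::finite param measure" where
  "prior = density lborel (\<lambda>x. ennreal (prior_density a0 a1 b1 a2 b2 \<mu> lam x))"

lemma sets_prior [measurable_cong]: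
  "sets (prior :: 'p::finite param measure) = sets (borel \<Otimes>\<^sub>M borel \<Otimes>\<^sub>M borel \<Otimes>\<^sub>M borel)"
  by (simp only: prior_def borel_prod sets_density sets_lborel)

lemma space_prior [simp]: "space prior = UNIV"
  by (simp add: prior_def)

lemma Collect_space_prior: "{x \<in> space prior. P x} = {x. P x}"
  by simp

lemma Collect_in_sets_prior [measurable (raw)]:
  "Measurable.pred (prior :: 'p::finite param measure) P \<Longrightarrow> {x. P x} \<in> sets prior"
  by (drule predE) simp

lemma nn_integral_prior_mult:
  fixes h1 h2 h3 :: "real \<Rightarrow> real" and h4 :: "real ^ 'p::finite \<Rightarrow> real"
  assumes [measurable]: "h1 \<in> borel_measurable borel" "h2 \<in> borel_measurable borel"
    "h3 \<in> borel_measurable borel" "h4 \<in> borel_measurable borel"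
    and nonneg: "\<And>t. h1 t \<ge> 0" "\<And>t. h2 t \<ge> 0" "\<And>t. h3 t \<ge> 0" "\<And>\<beta>. h4 \<beta> \<ge> 0"
  shows "(\<integral>\<^sup>+x. ennreal (h1 (fst x) * h2 (fst (snd x)) * h3 (fst (snd (snd x))) * h4 (snd (snd (snd x))))
             \<partial>(prior :: 'p param measure))
         = (\<integral>\<^sup>+t. ennreal (h1 t * ig_density a1 b1 t) \<partial>lborel) *
           (\<integral>\<^sup>+t. ennreal (h2 t * igauss_density \<mu> lam t) \<partial>lborel) *
           (\<integral>\<^sup>+t. ennreal (h3 t * ig_density a2 b2 t) \<partial>lborel) *
           (\<integral>\<^sup>+\<beta>. ennreal (h4 \<beta> * normal_vec_density (sqrt a0) \<beta>) \<partial>lborel)"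
proof -
  have ennreal_product: "ennreal (prior_density a0 a1 b1 a2 b2 \<mu> lam x) *
          ennreal (h1 (fst x) * h2 (fst (snd x)) * h3 (fst (snd (snd x))) * h4 (snd (snd (snd x))))
      = ennreal (h1 (fst x) * ig_density a1 b1 (fst x)) *
        ennreal (h2 (fst (snd x)) * igauss_density \<mu> lam (fst (snd x))) *
        ennreal (h3 (fst (snd (snd x))) * ig_density a2 b2 (fst (snd (snd x)))) *
        ennreal (h4 (snd (snd (snd x))) * normal_vec_density (sqrt a0) (snd (snd (snd x))))"
    for x :: "'p param"
    using nonneg a1 b1 a2 b2 lam
    by (simp add: prior_density_eq ig_density_nonneg igauss_density_nonneg normal_vec_density_nonneg
                  ennreal_mult' [symmetric] mult_ac)
  have [measurable]: "(\<lambda>x :: 'p param. h1 (fst x) * h2 (fst (snd x)) * h3 (fst (snd (snd x))) *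
      h4 (snd (snd (snd x)))) \<in> borel_measurable borel"
    by (simp only: borel_prod[symmetric]) measurable
  have "(\<integral>\<^sup>+x. ennreal (h1 (fst x) * h2 (fst (snd x)) * h3 (fst (snd (snd x))) * h4 (snd (snd (snd x))))
             \<partial>(prior :: 'p param measure))
      = (\<integral>\<^sup>+x. ennreal (prior_density a0 a1 b1 a2 b2 \<mu> lam x) *
          ennreal (h1 (fst x) * h2 (fst (snd x)) * h3 (fst (snd (snd x))) * h4 (snd (snd (snd x)))) \<partial>lborel)"
    unfolding prior_def by (rule nn_integral_density) simp_all
  also have "\<dots> = (\<integral>\<^sup>+x. ennreal (h1 (fst x) * ig_density a1 b1 (fst x)) *
          ennreal (h2 (fst (snd x)) * igauss_density \<mu> lam (fst (snd x))) *
          ennreal (h3 (fst (snd (snd x))) * ig_density a2 b2 (fst (snd (snd x)))) *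
          ennreal (h4 (snd (snd (snd x))) * normal_vec_density (sqrt a0) (snd (snd (snd x)))) \<partial>lborel)"
    by (simp only: ennreal_product)
  also have "\<dots> = (\<integral>\<^sup>+t. ennreal (h1 t * ig_density a1 b1 t) \<partial>lborel) *
           (\<integral>\<^sup>+t. ennreal (h2 t * igauss_density \<mu> lam t) \<partial>lborel) *
           (\<integral>\<^sup>+t. ennreal (h3 t * ig_density a2 b2 t) \<partial>lborel) *
           (\<integral>\<^sup>+\<beta>. ennreal (h4 \<beta> * normal_vec_density (sqrt a0) \<beta>) \<partial>lborel)"
    by (rule nn_integral_param_mult) measurable
  finally show ?thesis .
qed

lemma prior_density_nonneg: "prior_density a0 a1 b1 a2 b2 \<mu> lam x \<ge> 0"
  using a1 b1 a2 b2 lam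
  by (simp add: prior_density_eq ig_density_nonneg igauss_density_nonneg normal_vec_density_nonneg)

lemma emeasure_prior_space: "emeasure prior (UNIV :: 'p::finite param set) = 1"
  using nn_integral_prior_mult[of "\<lambda>_. 1" "\<lambda>_. 1" "\<lambda>_. 1" "\<lambda>_ :: real ^ 'p. 1"] a0 a1 b1 a2 b2 \<mu> lam
  by (simp add: nn_integral_ig_density nn_integral_igauss_density nn_integral_normal_vec_density)

lemma prob_space_prior: "prob_space (prior :: 'p::finite param measure)"
  by (rule prob_spaceI) (simp add: emeasure_prior_space)

lemma nn_integral_prior_theta:
  assumes "h \<in> borel_measurable borel" and "\<And>t. h t \<ge> 0"
  shows "(\<integral>\<^sup>+x. ennreal (h (fst x)) \<partial>(prior :: 'p::finite param measure))
           = (\<integral>\<^sup>+t. ennreal (h t * ig_density a1 b1 t) \<partial>lborel)"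
  using nn_integral_prior_mult[of h "\<lambda>_. 1" "\<lambda>_. 1" "\<lambda>_ :: real ^ 'p. 1"] assms a0 b2 a2 \<mu> lam
  by (simp add: nn_integral_ig_density nn_integral_igauss_density nn_integral_normal_vec_density)

lemma nn_integral_prior_alpha:
  assumes "h \<in> borel_measurable borel" and "\<And>t. h t \<ge> 0"
  shows "(\<integral>\<^sup>+x. ennreal (h (fst (snd x))) \<partial>(prior :: 'p::finite param measure))
           = (\<integral>\<^sup>+t. ennreal (h t * igauss_density \<mu> lam t) \<partial>lborel)"
  using nn_integral_prior_mult[of "\<lambda>_. 1" h "\<lambda>_. 1" "\<lambda>_ :: real ^ 'p. 1"] assms a0 a1 b1 a2 b2
  by (simp add: nn_integral_ig_density nn_integral_normal_vec_density)

lemma nn_integral_prior_tau: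
  assumes "h \<in> borel_measurable borel" and "\<And>t. h t \<ge> 0"
  shows "(\<integral>\<^sup>+x. ennreal (h (fst (snd (snd x)))) \<partial>(prior :: 'p::finite param measure))
           = (\<integral>\<^sup>+t. ennreal (h t * ig_density a2 b2 t) \<partial>lborel)"
  using nn_integral_prior_mult[of "\<lambda>_. 1" "\<lambda>_. 1" h "\<lambda>_ :: real ^ 'p. 1"] assms a0 a1 b1 \<mu> lam
  by (simp add: nn_integral_ig_density nn_integral_igauss_density nn_integral_normal_vec_density)

lemma nn_integral_prior_beta:
  assumes "h \<in> borel_measurable borel" and "\<And>\<beta>. h \<beta> \<ge> 0"
  shows "(\<integral>\<^sup>+x. ennreal (h (snd (snd (snd x)))) \<partial>(prior :: 'p::finite param measure))
           = (\<integral>\<^sup>+\<beta>. ennreal (h \<beta> * normal_vec_density (sqrt a0) \<beta>) \<partial>lborel)"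
  using nn_integral_prior_mult[of "\<lambda>_. 1" "\<lambda>_. 1" "\<lambda>_. 1" h] assms a1 b1 a2 b2 \<mu> lam
  by (simp add: nn_integral_ig_density nn_integral_igauss_density)

lemma prior_theta_moment_finite:
  assumes "q < a1"
  shows "(\<integral>\<^sup>+x. ennreal (fst x powr q) \<partial>(prior :: 'p::finite param measure)) < \<infinity>"
proof -
  have "(\<integral>\<^sup>+x. ennreal (fst x powr q) \<partial>(prior :: 'p param measure))
      = (\<integral>\<^sup>+t. ennreal (t powr q * ig_density a1 b1 t) \<partial>lborel)"
    by (rule nn_integral_prior_theta) auto
  then show ?thesis
    using assms a1 b1 by (simp add: nn_integral_ig_density_moment)
qed

lemma prior_tau_moment_finite:
  assumes "q < a2"
  shows "(\<integral>\<^sup>+x. ennreal (fst (snd (snd x)) powr q) \<partial>(prior :: 'p::finite param measure)) < \<infinity>"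
proof -
  have "(\<integral>\<^sup>+x. ennreal (fst (snd (snd x)) powr q) \<partial>(prior :: 'p param measure))
      = (\<integral>\<^sup>+t. ennreal (t powr q * ig_density a2 b2 t) \<partial>lborel)"
    by (rule nn_integral_prior_tau) auto
  then show ?thesis
    using assms a2 b2 by (simp add: nn_integral_ig_density_moment)
qed

lemma prior_alpha_negative_moment_finite:
  assumes "r \<ge> 0"
  shows "(\<integral>\<^sup>+x. ennreal (fst (snd x) powr (-r)) \<partial>(prior :: 'p::finite param measure)) < \<infinity>"
proof -
  have "(\<integral>\<^sup>+x. ennreal (fst (snd x) powr (-r)) \<partial>(prior :: 'p param measure))
      = (\<integral>\<^sup>+t. ennreal (t powr (-r) * igauss_density \<mu> lam t) \<partial>lborel)"
    by (rule nn_integral_prior_alpha) auto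
  then show ?thesis
    using igauss_density_moment_finite[OF \<mu> lam assms, of 0] \<mu> lam by simp
qed

lemma prior_alpha_exp_moment_finite:
  assumes "\<kappa> \<le> lam / (2 * \<mu>^2)"
  shows "(\<integral>\<^sup>+x. ennreal (exp (\<kappa> * fst (snd x))) \<partial>(prior :: 'p::finite param measure)) < \<infinity>"
proof -
  have "(\<integral>\<^sup>+x. ennreal (exp (\<kappa> * fst (snd x))) \<partial>(prior :: 'p param measure))
      = (\<integral>\<^sup>+t. ennreal (exp (\<kappa> * t) * igauss_density \<mu> lam t) \<partial>lborel)"
    by (rule nn_integral_prior_alpha) auto
  also have "\<dots> = (\<integral>\<^sup>+t. ennreal (t powr (-0) * exp (\<kappa> * t) * igauss_density \<mu> lam t) \<partial>lborel)"
    by (intro nn_integral_cong) (simp add: igauss_density_def)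
  also have "\<dots> < \<infinity>"
    by (rule igauss_density_moment_finite[OF \<mu> lam order_refl assms])
  finally show ?thesis .
qed

lemma prior_beta_exp_moment_finite:
  "(\<integral>\<^sup>+x. ennreal (exp ((norm (snd (snd (snd x))))^2 / (4 * a0))) \<partial>(prior :: 'p::finite param measure)) < \<infinity>"
proof -
  have "(\<integral>\<^sup>+x. ennreal (exp ((norm (snd (snd (snd x))))^2 / (4 * a0))) \<partial>(prior :: 'p param measure))
      = (\<integral>\<^sup>+\<beta>. ennreal (exp ((norm \<beta>)^2 / (4 * (sqrt a0)^2)) * normal_vec_density (sqrt a0) \<beta>)
          \<partial>(lborel :: (real ^ 'p) measure))"
    using a0 by (subst nn_integral_prior_beta) auto
  then show ?thesis
    using nn_integral_exp_norm_normal_vec_density[of "sqrt a0", where 'n='p] a0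
    by (simp add: power_less_top_ennreal)
qed

lemma emeasure_prior_nonpositive:
  "emeasure (prior :: 'p::finite param measure)
     {x. \<not> (0 < fst x \<and> 0 < fst (snd x) \<and> 0 < fst (snd (snd x)))} = 0"
proof -
  let ?Z = "{x :: 'p param. \<not> (0 < fst x \<and> 0 < fst (snd x) \<and> 0 < fst (snd (snd x)))}"
  have "{x \<in> space (borel :: 'p param measure). \<not> (0 < fst x \<and> 0 < fst (snd x) \<and> 0 < fst (snd (snd x)))}
      \<in> sets borel"
    by (simp only: borel_prod[symmetric]) measurable
  then have "emeasure prior ?Z = (\<integral>\<^sup>+x. ennreal (prior_density a0 a1 b1 a2 b2 \<mu> lam x) * indicator ?Z x \<partial>lborel)"
    unfolding prior_def by (subst emeasure_density) simp_all
  also have "\<dots> = (\<integral>\<^sup>+x. 0 \<partial>(lborel :: 'p param measure))"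
  proof (rule nn_integral_cong)
    fix x :: "'p param"
    have "prior_density a0 a1 b1 a2 b2 \<mu> lam x = 0" if "x \<in> ?Z"
      using that by (auto simp: prior_density_eq ig_density_def igauss_density_def)
    then show "ennreal (prior_density a0 a1 b1 a2 b2 \<mu> lam x) * indicator ?Z x = 0"
      by (cases "x \<in> ?Z") simp_all
  qed
  finally show ?thesis
    by simp
qed

lemma continuous_on_prior_density:
  fixes x0 :: "'p::finite param"
  assumes "0 < fst x0" and "0 < fst (snd x0)" and "0 < fst (snd (snd x0))"
  shows "\<exists>e>0. continuous_on (ball x0 e) (prior_density a0 a1 b1 a2 b2 \<mu> lam)"
proof -
  define e where "e = min (fst x0) (min (fst (snd x0)) (fst (snd (snd x0))))"
  have "0 < fst x \<and> 0 < fst (snd x) \<and> 0 < fst (snd (snd x))" if "x \<in> ball x0 e" for x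
  proof -
    have "dist (fst x0) (fst x) \<le> dist x0 x" "dist (fst (snd x0)) (fst (snd x)) \<le> dist x0 x"
      "dist (fst (snd (snd x0))) (fst (snd (snd x))) \<le> dist x0 x"
      using dist_fst_le order_trans[OF dist_fst_le dist_snd_le]
        order_trans[OF dist_fst_le order_trans[OF dist_snd_le dist_snd_le]] by blast+
    with that show ?thesis
      by (auto simp: e_def dist_real_def)
  qed
  then have "continuous_on (ball x0 e) (\<lambda>x. ig_density a1 b1 (fst x) * igauss_density \<mu> lam (fst (snd x)) *
      ig_density a2 b2 (fst (snd (snd x))) * normal_vec_density (sqrt a0) (snd (snd (snd x))))"
    using a0 \<mu>
    by (intro continuous_intros continuous_on_compose2[OF continuous_on_normal_vec_density[of _ UNIV]]
          continuous_on_compose2[OF continuous_on_ig_density]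
          continuous_on_compose2[OF continuous_on_igauss_density]) auto
  moreover have "e > 0"
    using assms by (simp add: e_def)
  ultimately show ?thesis
    unfolding prior_density_eq[abs_def] by blast
qed

lemma assumption_A3_prior:
  fixes x0 :: "'p::finite param"
  assumes x0: "0 < fst x0" "0 < fst (snd x0)" "0 < fst (snd (snd x0))"
  shows "assumption_A3 (prior_density a0 a1 b1 a2 b2 \<mu> lam) x0"
proof -
  have "(\<integral>\<^sup>+x. ennreal (prior_density a0 a1 b1 a2 b2 \<mu> lam x) \<partial>(lborel :: 'p param measure)) = 1"
    using emeasure_prior_space[where 'p='p] by (simp add: prior_def emeasure_density)
  moreover have "(\<integral>\<^sup>+x. ennreal (fst (snd (snd x)) powr (- (real n / 2)) * prior_density a0 a1 b1 a2 b2 \<mu> lam x)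
      \<partial>(lborel :: 'p param measure)) < \<infinity>" for n :: nat
  proof -
    have [measurable]: "(\<lambda>x :: 'p param. fst (snd (snd x)) powr (- (real n / 2))) \<in> borel_measurable borel"
      by (simp only: borel_prod[symmetric]) measurable
    have "(\<integral>\<^sup>+x. ennreal (fst (snd (snd x)) powr (- (real n / 2)) * prior_density a0 a1 b1 a2 b2 \<mu> lam x)
          \<partial>(lborel :: 'p param measure))
        = (\<integral>\<^sup>+x. ennreal (fst (snd (snd x)) powr (- (real n / 2))) \<partial>(prior :: 'p param measure))"
      unfolding prior_def
      by (subst nn_integral_density)
         (simp_all add: prior_density_nonneg ennreal_mult'[symmetric] mult.commute)
    also have "\<dots> < \<infinity>"
      using a2 by (intro prior_tau_moment_finite) simp
    finally show ?thesis .
  qed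
  moreover have "prior_density a0 a1 b1 a2 b2 \<mu> lam x0 > 0"
    using x0 a0 a1 b1 a2 b2 \<mu> lam
    by (simp add: prior_density_eq ig_density_pos igauss_density_pos normal_vec_density_pos)
  ultimately show ?thesis
    unfolding assumption_A3_def
    using continuous_on_prior_density[OF x0] by (auto simp: prior_density_nonneg)
qed

lemma measure_prior_theta_lower_tail:
  assumes "r > 0"
  shows "(\<lambda>n. measure prior {x :: 'p::finite param. 0 < fst x \<and> fst x < real n powr -r}) \<in> o(\<lambda>n. real n powr -E)"
proof -
  have "(\<lambda>n. measure prior {x :: 'p param \<in> space prior. 0 < fst x \<and> fst x < real n powr -r})
      \<in> o(\<lambda>n. real n powr -E)"
    by (rule smallo_measure_lower_tail)
       (measurable, fact assms, rule prior_theta_moment_finite, use a1 in simp)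
  then show ?thesis
    by (simp only: Collect_space_prior)
qed

lemma measure_prior_tau_lower_tail:
  assumes "r > 0"
  shows "(\<lambda>n. measure prior {x :: 'p::finite param. 0 < fst (snd (snd x)) \<and> fst (snd (snd x)) < real n powr -r})
           \<in> o(\<lambda>n. real n powr -E)"
proof -
  have "(\<lambda>n. measure prior {x :: 'p param \<in> space prior. 0 < fst (snd (snd x)) \<and> fst (snd (snd x)) < real n powr -r})
      \<in> o(\<lambda>n. real n powr -E)"
    by (rule smallo_measure_lower_tail)
       (measurable, fact assms, rule prior_tau_moment_finite, use a2 in simp)
  then show ?thesis
    by (simp only: Collect_space_prior)
qed

lemma measure_prior_alpha_lower_tail:
  assumes "r > 0"
  shows "(\<lambda>n. measure prior {x :: 'p::finite param. 0 < fst (snd x) \<and> fst (snd x) < real n powr -r})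
           \<in> o(\<lambda>n. real n powr -E)"
proof -
  have "(\<lambda>n. measure prior {x :: 'p param \<in> space prior. 0 < fst (snd x) \<and> fst (snd x) < real n powr -r})
      \<in> o(\<lambda>n. real n powr -E)"
    by (rule smallo_measure_lower_tail)
       (measurable, fact assms, rule prior_alpha_negative_moment_finite, simp)
  then show ?thesis
    by (simp only: Collect_space_prior)
qed

lemma measure_prior_theta_upper_tail:
  assumes r: "r > 0" and E: "E < r * a1"
  shows "(\<lambda>n. measure prior {x :: 'p::finite param. real n powr r < fst x}) \<in> o(\<lambda>n. real n powr -E)"
proof -
  obtain Q where Q: "max 0 (E / r) < Q" "Q < a1"
    using a1 E r dense[of "max 0 (E / r)" a1] by (auto simp: field_simps)
  have "(\<lambda>n. measure prior {x :: 'p param \<in> space prior. real n powr r < fst x}) \<in> o(\<lambda>n. real n powr -E)"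
    by (rule smallo_measure_upper_tail[where Q = Q])
       (measurable, use Q in simp, use Q r in \<open>simp add: field_simps\<close>,
        rule prior_theta_moment_finite, fact Q(2))
  then show ?thesis
    by (simp only: Collect_space_prior)
qed

lemma measure_prior_tau_upper_tail:
  assumes r: "r > 0" and E: "E < r * a2"
  shows "(\<lambda>n. measure prior {x :: 'p::finite param. real n powr r < fst (snd (snd x))}) \<in> o(\<lambda>n. real n powr -E)"
proof -
  obtain Q where Q: "max 0 (E / r) < Q" "Q < a2"
    using a2 E r dense[of "max 0 (E / r)" a2] by (auto simp: field_simps)
  have "(\<lambda>n. measure prior {x :: 'p param \<in> space prior. real n powr r < fst (snd (snd x))})
      \<in> o(\<lambda>n. real n powr -E)"
    by (rule smallo_measure_upper_tail[where Q = Q])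
       (measurable, use Q in simp, use Q r in \<open>simp add: field_simps\<close>,
        rule prior_tau_moment_finite, fact Q(2))
  then show ?thesis
    by (simp only: Collect_space_prior)
qed

lemma measure_prior_alpha_upper_tail:
  assumes "r > 0"
  shows "(\<lambda>n. measure prior {x :: 'p::finite param. real n powr r < fst (snd x)}) \<in> o(\<lambda>n. real n powr -E)"
proof -
  have "(\<lambda>n. measure prior {x :: 'p param \<in> space prior. real n powr r < fst (snd x)}) \<in> o(\<lambda>n. real n powr -E)"
    by (rule smallo_measure_exp_tail[where \<kappa> = "lam / (2 * \<mu>^2)"])
       (measurable, use \<mu> lam in simp, fact assms, rule prior_alpha_exp_moment_finite, simp)
  then show ?thesis
    by (simp only: Collect_space_prior)
qed

lemma measure_prior_beta_upper_tail:
  assumes "r > 0"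
  shows "(\<lambda>n. measure prior {x :: 'p::finite param. real n powr r < (norm (snd (snd (snd x))))^2})
           \<in> o(\<lambda>n. real n powr -E)"
proof -
  have "(\<lambda>n. measure prior {x :: 'p param \<in> space prior. real n powr r < (norm (snd (snd (snd x))))^2})
      \<in> o(\<lambda>n. real n powr -E)"
    by (rule smallo_measure_exp_tail[where \<kappa> = "1 / (4 * a0)"])
       (measurable, use a0 in simp, fact assms, use prior_beta_exp_moment_finite in simp)
  then show ?thesis
    by (simp only: Collect_space_prior)
qed

lemma measure_sieve_tails_smallo:
  assumes \<rho>: "0 < \<rho>1" "0 < \<rho>21" "0 < \<rho>22" "0 < \<rho>31" "0 < \<rho>32"
    and "2 * E / \<rho>21 < a1" and "2 * E / \<rho>22 < a2"
  shows "(\<lambda>n. measure prior (sieve_tails \<rho>1 \<rho>21 \<rho>22 \<rho>31 \<rho>32 n :: 'p::finite param set))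
           \<in> o(\<lambda>n. real n powr -E)"
proof -
  have bounds: "0 < \<rho>1 / 2" "0 < \<rho>21 / 2" "0 < \<rho>22 / 2" "E < \<rho>21 / 2 * a1" "E < \<rho>22 / 2 * a2"
    using assms by (auto simp: field_simps)
  have null: "(\<lambda>n. measure prior {x :: 'p param. \<not> (0 < fst x \<and> 0 < fst (snd x) \<and> 0 < fst (snd (snd x)))})
      \<in> o(\<lambda>n. real n powr -E)"
    unfolding measure_def emeasure_prior_nonpositive by simp
  show ?thesis
    unfolding sieve_tails_def
    by (intro smallo_measure_Un null measure_prior_theta_lower_tail measure_prior_tau_lower_tail
          measure_prior_alpha_lower_tail measure_prior_theta_upper_tail measure_prior_tau_upper_tail
          measure_prior_alpha_upper_tail measure_prior_beta_upper_tail; (rule bounds \<rho> | measurable))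
qed

lemma eventually_emeasure_sieve_complement_le:
  assumes "0 < \<rho>1" "0 < \<rho>21" "0 < \<rho>22" "0 < \<rho>31" "0 < \<rho>32"
    and "2 * E / \<rho>21 < a1" and "2 * E / \<rho>22 < a2"
  shows "\<forall>\<^sub>F n in sequentially.
           emeasure prior (UNIV - sieve_E \<rho>1 \<rho>21 \<rho>22 \<rho>31 \<rho>32 n :: 'p::finite param set)
             \<le> ennreal (real n powr -E)"
proof -
  interpret prob_space "prior :: 'p param measure"
    by (rule prob_space_prior)
  have "(\<lambda>n. measure prior (UNIV - sieve_E \<rho>1 \<rho>21 \<rho>22 \<rho>31 \<rho>32 n :: 'p param set))
      \<in> O(\<lambda>n. measure prior (sieve_tails \<rho>1 \<rho>21 \<rho>22 \<rho>31 \<rho>32 n :: 'p param set))"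
  proof (intro bigoI[where c = 1])
    show "\<forall>\<^sub>F n in sequentially.
        norm (measure prior (UNIV - sieve_E \<rho>1 \<rho>21 \<rho>22 \<rho>31 \<rho>32 n :: 'p param set))
          \<le> 1 * norm (measure prior (sieve_tails \<rho>1 \<rho>21 \<rho>22 \<rho>31 \<rho>32 n :: 'p param set))"
      using eventually_gt_at_top[of 0]
    proof eventually_elim
      case (elim n)
      have "sieve_tails \<rho>1 \<rho>21 \<rho>22 \<rho>31 \<rho>32 n \<in> sets (prior :: 'p param measure)"
        unfolding sieve_tails_def by measurable
      then show ?case
        using finite_measure_mono[OF sieve_complement_subset_tails[OF elim]] by simp
    qed
  qed
  from landau_o.big_small_trans[OF this measure_sieve_tails_smallo[OF assms]]
  have "\<forall>\<^sub>F n in sequentially. measure prior (UNIV - sieve_E \<rho>1 \<rho>21 \<rho>22 \<rho>31 \<rho>32 n :: 'p param set)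
      \<le> real n powr -E"
    by (auto dest: landau_o.smallD[where c = 1] elim!: eventually_mono)
  then show ?thesis
    by eventually_elim (simp add: emeasure_eq_measure)
qed

end

theorem proposition2:
  fixes d :: nat and \<nu> \<rho>1 \<rho>21 \<rho>22 \<rho>31 \<rho>32 :: real
    and a0 a1 b1 a2 b2 \<mu> lam :: real
    and dummy :: "'p::finite itself"
  assumes d_pos: "d > 0" and nu_pos: "\<nu> > 0"
    and rho: "\<exists>\<gamma>. max (1 - real d / (4 * \<nu>)) 0 < \<gamma> \<and> \<gamma> < 1 \<and>
              0 < \<rho>1 \<and> \<rho>1 < 1 - \<gamma> \<and>
              0 < \<rho>21 \<and> \<rho>21 < 2 * \<nu> * (1 - \<gamma>) / real d \<and>
              0 < \<rho>22 \<and> \<rho>22 < 1/2 - 2 * (1 - \<gamma>) * \<nu> / real d \<and>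
              0 < \<rho>31 \<and>
              0 < \<rho>32 \<and> \<rho>32 < (1 - \<gamma>) / real d"
    and hyp_pos: "a0 > 0" "a1 > 0" "b1 > 0" "a2 > 0" "b2 > 0" "\<mu> > 0" "lam > 0"
    and a1_big: "a1 > 2 * (3 * real CARD('p) + 6) / \<rho>21"
    and a2_big: "a2 > 2 * (3 * real CARD('p) + 6) / \<rho>22"
  shows "(\<forall>(x0 :: 'p param). fst x0 > 0 \<and> fst (snd x0) > 0 \<and> fst (snd (snd x0)) > 0 \<longrightarrow>
            assumption_A3 (prior_density a0 a1 b1 a2 b2 \<mu> lam) x0) \<and>
         (\<forall>\<^sub>F n in sequentially.
            emeasure (density lborel (\<lambda>x. ennreal (prior_density a0 a1 b1 a2 b2 \<mu> lam x)))
              (UNIV - (sieve_E \<rho>1 \<rho>21 \<rho>22 \<rho>31 \<rho>32 n :: 'p param set))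
            \<le> ennreal (real n powr (- (3 * real CARD('p) + 6))))"
proof -
  interpret product_prior a0 a1 b1 a2 b2 \<mu> lam
    using hyp_pos by unfold_locales
  \<comment> \<open>Only the positivity of the exponents \<open>\<rho>\<close> matters here; their upper bounds in terms of
    \<open>\<nu>\<close>, \<open>d\<close> and \<open>\<gamma>\<close> are needed elsewhere in the paper, not for this proposition.\<close>
  have \<rho>: "0 < \<rho>1" "0 < \<rho>21" "0 < \<rho>22" "0 < \<rho>31" "0 < \<rho>32"
    using rho by auto
  show ?thesis
    using assumption_A3_prior eventually_emeasure_sieve_complement_le[OF \<rho> a1_big a2_big]
    unfolding prior_def by blast
qed

end
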